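(* Let $\widetilde{\mathbb{F}}$ be a field. There exists an SD-map $f:\mathbb{F}_5\to\widetilde{\mathbb{F}}$ if and only if $\widetilde{\mathbb{F}}$ contains a primitive fourth root of unity.
   Context: $\mathbb{F}_5=\mathbb{Z}/5\mathbb{Z}$. A map $f:\mathbb{F}\to\widetilde{\mathbb{F}}$ between fields is called an SD-map if for all $x\neq y$ in $\mathbb{F}$ one has $f(x)\neq f(y)$ and \[ f\left(\frac{x+y}{x-y}\right)=\frac{f(x)+f(y)}{f(x)-f(y)}. \] *)

theory Defs
  imports "HOL-Library.Numeral_Type"
begin

text \<open>The field F_5 = Z/5Z is modelled by the numeral type 5 (arithmetic mod 5).
  This type is only a comm_ring_1 in the library, so division in F_5 is defined
  explicitly: for y nonzero, the inverse of y in F_5 is y^3 (Fermat), hence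
  x / y = x * y^3.\<close>

definition F5_div :: "5 \<Rightarrow> 5 \<Rightarrow> 5" where
  "F5_div x y = x * y ^ 3"

definition SD_map_F5 :: "(5 \<Rightarrow> 'b::field) \<Rightarrow> bool" where
  "SD_map_F5 f \<longleftrightarrow>
     (\<forall>x y. x \<noteq> y \<longrightarrow>
        f x \<noteq> f y \<and> f (F5_div (x + y) (x - y)) = (f x + f y) / (f x - f y))"

definition primitive_fourth_root :: "'b::field \<Rightarrow> bool" where
  "primitive_fourth_root z \<longleftrightarrow> z ^ 4 = 1 \<and> (\<forall>k::nat. 0 < k \<and> k < 4 \<longrightarrow> z ^ k \<noteq> 1)"

end

theory Submission
  imports Defs
begin

(* Evaluating the SD-equation at the pairs (1,0) and (0,1) gives f 4 = - f 1, so the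
   characteristic is not 2 (f is injective); the pair (4,0) then forces f 0 = 0 and f 1 = 1,
   and the pair (1,2) gives (f 2)^2 = -1. Conversely, if z^2 = -1 in characteristic not 2,
   the map sending 0 to 0 and 2^k to z^k is an SD-map, by a check of the 20 pairs. *)

lemma F5_cases:
  obtains "(x::5) = 0" | "x = 1" | "x = 2" | "x = 3" | "x = 4"
proof (cases x)
  case (of_int k)
  then have "k = 0 \<or> k = 1 \<or> k = 2 \<or> k = 3 \<or> k = 4" by auto
  with of_int that show thesis by auto
qed

lemma primitive_fourth_root_iff:
  fixes z :: "'b::field"
  shows "primitive_fourth_root z \<longleftrightarrow> z\<^sup>2 = -1 \<and> (2::'b) \<noteq> 0"
proof
  assume z: "primitive_fourth_root z"
  then have "z\<^sup>2 \<noteq> 1" by (simp add: primitive_fourth_root_def)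
  moreover have "(z\<^sup>2 - 1) * (z\<^sup>2 + 1) = 0"
    using z by (simp add: primitive_fourth_root_def algebra_simps flip: power_add)
  ultimately have "z\<^sup>2 = -1" by (simp add: eq_neg_iff_add_eq_0)
  with \<open>z\<^sup>2 \<noteq> 1\<close> show "z\<^sup>2 = -1 \<and> (2::'b) \<noteq> 0"
    by (metis add_eq_0_iff one_add_one)
next
  assume "z\<^sup>2 = -1 \<and> (2::'b) \<noteq> 0"
  then have sq: "z\<^sup>2 = -1" and two: "(2::'b) \<noteq> 0" by auto
  have "z ^ 4 = (z\<^sup>2)\<^sup>2" by (simp flip: power_mult)
  then have "z ^ 4 = 1" using sq by simp
  moreover have "z ^ k \<noteq> 1" if "0 < k" "k < 4" for k :: nat
  proof -
    have "z ^ 3 = - z" using sq by (simp add: power3_eq_cube power2_eq_square)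
    moreover have "z \<noteq> 1" "z \<noteq> -1" "z\<^sup>2 \<noteq> 1" using sq two by auto
    moreover have "k = 1 \<or> k = 2 \<or> k = 3" using that by auto
    ultimately show ?thesis by (auto simp: minus_equation_iff)
  qed
  ultimately show "primitive_fourth_root z"
    unfolding primitive_fourth_root_def by blast
qed

lemma SD_map_F5_neq:
  "SD_map_F5 f \<Longrightarrow> x \<noteq> y \<Longrightarrow> f x \<noteq> f y"
  by (simp add: SD_map_F5_def)

lemma SD_map_F5_eq:
  assumes "SD_map_F5 f" "x \<noteq> y" "F5_div (x + y) (x - y) = q"
  shows "f q * (f x - f y) = f x + f y"
proof -
  have "f x \<noteq> f y" and "f q = (f x + f y) / (f x - f y)"
    using assms unfolding SD_map_F5_def by blast+
  then show ?thesis by simp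
qed

lemma SD_map_F5_square_minus_one:
  fixes f :: "5 \<Rightarrow> 'b::field"
  assumes f: "SD_map_F5 f"
  shows "(f 2)\<^sup>2 = -1" and "(2::'b) \<noteq> 0"
proof -
  have sd_1_0: "f 1 * (f 1 - f 0) = f 1 + f 0"
    by (rule SD_map_F5_eq[OF f]) (simp_all add: F5_div_def)
  have sd_0_1: "f 4 * (f 0 - f 1) = f 0 + f 1"
    by (rule SD_map_F5_eq[OF f]) (simp_all add: F5_div_def)
  have sd_4_0: "f 1 * (f 4 - f 0) = f 4 + f 0"
    by (rule SD_map_F5_eq[OF f]) (simp_all add: F5_div_def)
  have sd_1_2: "f 2 * (f 1 - f 2) = f 1 + f 2"
    by (rule SD_map_F5_eq[OF f]) (simp_all add: F5_div_def)
  have "(f 0 - f 1) * (f 4 + f 1) = 0"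
    using sd_1_0 sd_0_1 by (simp add: algebra_simps)
  then have f4: "f 4 = - f 1"
    using SD_map_F5_neq[OF f, of 0 1] by (simp add: eq_neg_iff_add_eq_0)
  show two: "(2::'b) \<noteq> 0"
  proof
    assume "(2::'b) = 0"
    then have "f 4 = f 1" using f4 by (metis add_eq_0_iff mult_2 mult_zero_left)
    with SD_map_F5_neq[OF f, of 4 1] show False by simp
  qed
  have "2 * (f 1 * f 1) = 2 * f 1" and "2 * (f 0 * (f 1 + 1)) = 0"
    using sd_1_0 sd_4_0 f4 by algebra+
  then have idem: "f 1 * f 1 = f 1" and f0: "f 0 * (f 1 + 1) = 0"
    using two by simp_all
  have "f 1 \<noteq> 0"
  proof
    assume "f 1 = 0"
    with f0 have "f 0 = f 1" by simp
    with SD_map_F5_neq[OF f, of 0 1] show False by simp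
  qed
  with idem have f1: "f 1 = 1" by simp
  have "f 2 * f 2 + 1 = 0"
    using sd_1_2 f1 by algebra
  then show "(f 2)\<^sup>2 = -1"
    by (simp add: power2_eq_square eq_neg_iff_add_eq_0)
qed

(* 2 generates the cyclic group F_5^*, and this map sends 2^k to z^k. *)
definition fourth_root_map :: "'b::field \<Rightarrow> 5 \<Rightarrow> 'b" where
  "fourth_root_map z x =
     (if x = 0 then 0 else if x = 1 then 1 else if x = 2 then z else if x = 3 then - z else - 1)"

lemma SD_map_F5_fourth_root_map:
  fixes z :: "'b::field"
  assumes sq: "z\<^sup>2 = -1" and two: "(2::'b) \<noteq> 0"
  shows "SD_map_F5 (fourth_root_map z)"
  unfolding SD_map_F5_def
proof (intro allI impI)
  fix x y :: 5
  assume "x \<noteq> y"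
  have z_square: "z * z = -1" using sq by (simp add: power2_eq_square)
  have z_neq: "z \<noteq> 0" "z \<noteq> 1" "z \<noteq> -1"
    using sq two by auto
  then have z_neq': "- z \<noteq> 1" "1 + z \<noteq> 0" "- z - 1 \<noteq> 0"
    by (auto simp: minus_equation_iff add_eq_0_iff diff_eq_eq)
  show "fourth_root_map z x \<noteq> fourth_root_map z y \<and>
    fourth_root_map z (F5_div (x + y) (x - y)) =
      (fourth_root_map z x + fourth_root_map z y) / (fourth_root_map z x - fourth_root_map z y)"
    using \<open>x \<noteq> y\<close> z_square z_neq z_neq' two
    by (cases x rule: F5_cases; cases y rule: F5_cases)
      (simp_all add: fourth_root_map_def F5_div_def field_simps)
qed

lemma SD_map_F5_primitive_fourth_root:
  "SD_map_F5 f \<Longrightarrow> primitive_fourth_root (f 2)"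
  by (simp add: primitive_fourth_root_iff SD_map_F5_square_minus_one)

lemma primitive_fourth_root_SD_map_F5:
  "primitive_fourth_root z \<Longrightarrow> SD_map_F5 (fourth_root_map z)"
  by (simp add: primitive_fourth_root_iff SD_map_F5_fourth_root_map)

theorem proposition2p3:
  shows "(\<exists>f :: 5 \<Rightarrow> 'b::field. SD_map_F5 f) \<longleftrightarrow> (\<exists>z :: 'b. primitive_fourth_root z)"
  using SD_map_F5_primitive_fourth_root primitive_fourth_root_SD_map_F5 by blast

end
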